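(* The structure $\varphi$ is Abelian, i.e. $[\varphi x,\varphi y]=[x,y]$ for all $x,y\in\mathfrak l$, if and only if $(L,\varphi,\xi,\eta,g)$ belongs to $\mathcal{F}_1\oplus\mathcal{F}_8\oplus\mathcal{F}_{10}$ with $2\lambda=\nu$, where $\lambda=F_{101}$ and $\nu=F_{011}$.
   Context: Let $L$ be a 3-dimensional real connected Lie group with Lie algebra $\mathfrak l$, and let $\{E_0,E_1,E_2\}$ be a basis of left-invariant vector fields, with $[E_i,E_j]=C_{ij}^kE_k$. Define the left-invariant almost contact structure $(\varphi,\xi,\eta)$ by $\varphi E_0=0$, $\varphi E_1=E_2$, $\varphi E_2=-E_1$, $\xi=E_0$, $\eta(E_0)=1$, $\eta(E_1)=\eta(E_2)=0$, and the left-invariant pseudo-Riemannian metric $g$ by $g(E_0,E_0)=g(E_1,E_1)=-g(E_2,E_2)=1$, $g(E_i,E_j)=0$ for $i\neq j$. Let $\nabla$ be the Levi-Civita connection of $g$, $F(x,y,z)=g((\nabla_x\varphi)y,z)$, and $F_{ijk}=F(E_i,E_j,E_k)$. The manifold belongs to $\mathcal{F}_1\oplus\mathcal{F}_8\oplus\mathcal{F}_{10}$ iff all $F_{ijk}$ vanish except possibly $F_{111}=F_{122}$, $F_{211}=F_{222}$ (the $\mathcal{F}_1$ part), $F_{101}=F_{110}=F_{202}=F_{220}=:\lambda$ (the $\mathcal{F}_8$ part) and $F_{011}=F_{022}=:\nu$ (the $\mathcal{F}_{10}$ part). *)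

theory Defs
  imports Complex_Main
begin

text \<open>Left-invariant vector fields on the 3-dimensional Lie group L are identified with
  the Lie algebra l; an element x of l is encoded by its coordinates x 0, x 1, x 2 with
  respect to the basis E0, E1, E2 (values at indices ge 3 are ignored).
  The structure constants are C i j k, i.e. [E_i,E_j] = sum_k C i j k E_k.\<close>

type_synonym vec3 = "nat \<Rightarrow> real"

definition basis3 :: "nat \<Rightarrow> vec3" where
  "basis3 i = (\<lambda>k. if k = i then 1 else 0)"

definition lie_br :: "(nat \<Rightarrow> nat \<Rightarrow> nat \<Rightarrow> real) \<Rightarrow> vec3 \<Rightarrow> vec3 \<Rightarrow> vec3" where
  "lie_br C x y = (\<lambda>k. \<Sum>i<3. \<Sum>j<3. x i * y j * C i j k)"

definition is_lie_algebra3 :: "(nat \<Rightarrow> nat \<Rightarrow> nat \<Rightarrow> real) \<Rightarrow> bool" where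
  "is_lie_algebra3 C \<longleftrightarrow>
     (\<forall>x y. \<forall>k<3. lie_br C x y k = - lie_br C y x k) \<and>
     (\<forall>x y z. \<forall>k<3. lie_br C x (lie_br C y z) k + lie_br C y (lie_br C z x) k
                     + lie_br C z (lie_br C x y) k = 0)"

definition phi3 :: "vec3 \<Rightarrow> vec3" where
  "phi3 x = (\<lambda>k. if k = 1 then - x 2 else if k = 2 then x 1 else 0)"

definition eps3 :: "nat \<Rightarrow> real" where
  "eps3 k = (if k = 2 then -1 else 1)"

definition g3 :: "vec3 \<Rightarrow> vec3 \<Rightarrow> real" where
  "g3 x y = (\<Sum>k<3. eps3 k * x k * y k)"

text \<open>Levi-Civita connection on left-invariant fields via the Koszul formula
  2 g(nabla_X Y, Z) = g([X,Y],Z) - g([Y,Z],X) + g([Z,X],Y).\<close>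
definition lc_nabla :: "(nat \<Rightarrow> nat \<Rightarrow> nat \<Rightarrow> real) \<Rightarrow> vec3 \<Rightarrow> vec3 \<Rightarrow> vec3" where
  "lc_nabla C x y = (\<lambda>k. eps3 k / 2 *
      (g3 (lie_br C x y) (basis3 k) - g3 (lie_br C y (basis3 k)) x
       + g3 (lie_br C (basis3 k) x) y))"

definition Ften :: "(nat \<Rightarrow> nat \<Rightarrow> nat \<Rightarrow> real) \<Rightarrow> vec3 \<Rightarrow> vec3 \<Rightarrow> vec3 \<Rightarrow> real" where
  "Ften C x y z = g3 (\<lambda>k. lc_nabla C x (phi3 y) k - phi3 (lc_nabla C x y) k) z"

definition Fc :: "(nat \<Rightarrow> nat \<Rightarrow> nat \<Rightarrow> real) \<Rightarrow> nat \<Rightarrow> nat \<Rightarrow> nat \<Rightarrow> real" where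
  "Fc C i j k = Ften C (basis3 i) (basis3 j) (basis3 k)"

definition phi_abelian :: "(nat \<Rightarrow> nat \<Rightarrow> nat \<Rightarrow> real) \<Rightarrow> bool" where
  "phi_abelian C \<longleftrightarrow> (\<forall>x y. \<forall>k<3. lie_br C (phi3 x) (phi3 y) k = lie_br C x y k)"

definition in_F1_F8_F10 :: "(nat \<Rightarrow> nat \<Rightarrow> nat \<Rightarrow> real) \<Rightarrow> bool" where
  "in_F1_F8_F10 C \<longleftrightarrow>
     (\<forall>i<3. \<forall>j<3. \<forall>k<3. (i, j, k) \<notin>
        {(1,1,1), (1,2,2), (2,1,1), (2,2,2), (1,0,1), (1,1,0), (2,0,2), (2,2,0), (0,1,1), (0,2,2)}
        \<longrightarrow> Fc C i j k = 0) \<and>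
     Fc C 1 1 1 = Fc C 1 2 2 \<and> Fc C 2 1 1 = Fc C 2 2 2 \<and>
     Fc C 1 0 1 = Fc C 1 1 0 \<and> Fc C 1 1 0 = Fc C 2 0 2 \<and> Fc C 2 0 2 = Fc C 2 2 0 \<and>
     Fc C 0 1 1 = Fc C 0 2 2"

end

theory Submission
  imports Defs
begin

text \<open>
  Write c_ijk for the structure constants, [E_i,E_j] = sum_k c_ijk E_k, and
  use only their skew-symmetry c_jik = -c_ijk (a consequence of the Lie algebra axioms).
  Both sides of the theorem turn out to be equivalent to the single condition that the
  Reeb field xi = E0 is central, i.e. c_0jk = 0 for all j, k:

  (1) phi kills E0, so an Abelian phi forces [E0,E_j] = [phi E0, phi E_j] = 0; conversely,
      if E0 is central then both [phi x, phi y] and [x,y] reduce to (x1 y2 - x2 y1)[E1,E2].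

  (2) From the Koszul formula one computes every component F_ijk explicitly as a linear
      expression in the c_ijk (lemma Fc_table).  Reading off the table, membership in
      F1 + F8 + F10 amounts to c_010 = c_020 = c_011 = c_022 = 0 and c_012 = c_021, and then
      lambda = c_120 / 2 while nu = 2 c_012 + c_120, so 2 lambda = nu exactly when the
      remaining constants c_012 = c_021 vanish as well.
\<close>

lemma sum_lessThan_3: "(\<Sum>i<(3::nat). f i) = f 0 + f 1 + f 2"
  by (simp add: numeral_3_eq_3 numeral_2_eq_2)

lemma all_lessThan_3: "(\<forall>i<(3::nat). P i) \<longleftrightarrow> P 0 \<and> P 1 \<and> P 2"
proof -
  have "\<And>i::nat. i < 3 \<longleftrightarrow> i = 0 \<or> i = 1 \<or> i = 2" by auto
  then show ?thesis by auto
qed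

lemma lie_br_basis:
  assumes "i < 3" "j < 3"
  shows "lie_br C (basis3 i) (basis3 j) k = C i j k"
proof -
  from assms have "i = 0 \<or> i = 1 \<or> i = 2" "j = 0 \<or> j = 1 \<or> j = 2" by auto
  then show ?thesis unfolding lie_br_def basis3_def sum_lessThan_3 by auto
qed

definition skew_constants :: "(nat \<Rightarrow> nat \<Rightarrow> nat \<Rightarrow> real) \<Rightarrow> bool" where
  "skew_constants C \<longleftrightarrow> (\<forall>i<3. \<forall>j<3. \<forall>k<3. C j i k = - C i j k)"

lemma lie_algebra_skew_constants:
  assumes "is_lie_algebra3 C"
  shows "skew_constants C"
  unfolding skew_constants_def
proof (intro allI impI)
  fix i j k :: nat
  assume ij: "i < 3" "j < 3" and "k < 3"
  have "C j i k = lie_br C (basis3 j) (basis3 i) k"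
    using ij by (simp add: lie_br_basis)
  also have "\<dots> = - lie_br C (basis3 i) (basis3 j) k"
    using assms \<open>k < 3\<close> unfolding is_lie_algebra3_def by blast
  also have "\<dots> = - C i j k"
    using ij by (simp add: lie_br_basis)
  finally show "C j i k = - C i j k" .
qed

lemma skew_constants_simps:
  assumes "skew_constants C" and "k < 3"
  shows "C 1 0 k = - C 0 1 k" "C 2 0 k = - C 0 2 k" "C 2 1 k = - C 1 2 k"
    "C 0 0 k = 0" "C 1 1 k = 0" "C 2 2 k = 0"
proof -
  have skew: "C j i k = - C i j k" if "i < 3" "j < 3" for i j
    using assms that unfolding skew_constants_def by blast
  show "C 1 0 k = - C 0 1 k" "C 2 0 k = - C 0 2 k" "C 2 1 k = - C 1 2 k"
    using skew[of 0 1] skew[of 0 2] skew[of 1 2] by simp_all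
  show "C 0 0 k = 0" "C 1 1 k = 0" "C 2 2 k = 0"
    using skew[of 0 0] skew[of 1 1] skew[of 2 2] by simp_all
qed

definition xi_central :: "(nat \<Rightarrow> nat \<Rightarrow> nat \<Rightarrow> real) \<Rightarrow> bool" where
  "xi_central C \<longleftrightarrow> (\<forall>j<3. \<forall>k<3. C 0 j k = 0)"

lemma xi_central_iff:
  assumes "skew_constants C"
  shows "xi_central C \<longleftrightarrow>
    C 0 1 0 = 0 \<and> C 0 1 1 = 0 \<and> C 0 1 2 = 0 \<and> C 0 2 0 = 0 \<and> C 0 2 1 = 0 \<and> C 0 2 2 = 0"
  using skew_constants_simps(4)[OF assms]
  unfolding xi_central_def all_lessThan_3 by auto

text \<open>Since phi E0 = 0, an Abelian phi forces [E0, E_j] = 0.\<close>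
lemma phi_abelian_imp_xi_central:
  assumes "phi_abelian C"
  shows "xi_central C"
  unfolding xi_central_def
proof (intro allI impI)
  fix j k :: nat
  assume "j < 3" "k < 3"
  have phi_xi: "phi3 (basis3 0) = (\<lambda>_. 0)"
    unfolding phi3_def basis3_def by auto
  have "C 0 j k = lie_br C (basis3 0) (basis3 j) k"
    using \<open>j < 3\<close> by (simp add: lie_br_basis)
  also have "\<dots> = lie_br C (phi3 (basis3 0)) (phi3 (basis3 j)) k"
    using assms \<open>k < 3\<close> unfolding phi_abelian_def by simp
  also have "\<dots> = 0"
    unfolding phi_xi lie_br_def by simp
  finally show "C 0 j k = 0" .
qed

text \<open>If E0 is central, both brackets reduce to (x1 y2 - x2 y1) [E1,E2].\<close>
lemma xi_central_imp_phi_abelian: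
  assumes "skew_constants C" and "xi_central C"
  shows "phi_abelian C"
  unfolding phi_abelian_def all_lessThan_3 lie_br_def phi3_def sum_lessThan_3
  using skew_constants_simps[OF assms(1)] assms(2)[unfolded xi_central_iff[OF assms(1)]]
  by (simp add: algebra_simps)

lemma phi_abelian_iff_xi_central:
  assumes "skew_constants C"
  shows "phi_abelian C \<longleftrightarrow> xi_central C"
  using phi_abelian_imp_xi_central xi_central_imp_phi_abelian[OF assms] by blast

lemma Fc_table:
  assumes "skew_constants C"
  shows
    "Fc C 0 0 0 = 0"
    "Fc C 0 0 1 = C 0 2 0" "Fc C 0 1 0 = C 0 2 0"
    "Fc C 0 0 2 = - C 0 1 0" "Fc C 0 2 0 = - C 0 1 0"
    "Fc C 0 1 1 = C 0 1 2 + C 0 2 1 + C 1 2 0" "Fc C 0 2 2 = C 0 1 2 + C 0 2 1 + C 1 2 0"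
    "Fc C 0 1 2 = 0" "Fc C 0 2 1 = 0"
    "Fc C 1 0 0 = 0" "Fc C 1 1 2 = 0" "Fc C 1 2 1 = 0"
    "Fc C 1 0 1 = (C 0 2 1 + C 1 2 0 - C 0 1 2) / 2" "Fc C 1 1 0 = (C 0 2 1 + C 1 2 0 - C 0 1 2) / 2"
    "Fc C 1 0 2 = - C 0 1 1" "Fc C 1 2 0 = - C 0 1 1"
    "Fc C 1 1 1 = 2 * C 1 2 1" "Fc C 1 2 2 = 2 * C 1 2 1"
    "Fc C 2 0 0 = 0" "Fc C 2 1 2 = 0" "Fc C 2 2 1 = 0"
    "Fc C 2 0 2 = (C 0 1 2 + C 1 2 0 - C 0 2 1) / 2" "Fc C 2 2 0 = (C 0 1 2 + C 1 2 0 - C 0 2 1) / 2"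
    "Fc C 2 0 1 = - C 0 2 2" "Fc C 2 1 0 = - C 0 2 2"
    "Fc C 2 1 1 = - 2 * C 1 2 2" "Fc C 2 2 2 = - 2 * C 1 2 2"
  using skew_constants_simps[OF assms]
  unfolding Fc_def Ften_def lc_nabla_def g3_def lie_br_def basis3_def phi3_def eps3_def
    sum_lessThan_3
  by (simp_all add: field_simps)

lemma in_F1_F8_F10_iff:
  assumes "skew_constants C"
  shows "in_F1_F8_F10 C \<longleftrightarrow>
    C 0 1 0 = 0 \<and> C 0 2 0 = 0 \<and> C 0 1 1 = 0 \<and> C 0 2 2 = 0 \<and> C 0 1 2 = C 0 2 1"
  unfolding in_F1_F8_F10_def all_lessThan_3 Fc_table[OF assms] by auto

lemma F1_F8_F10_lambda_nu:
  assumes "skew_constants C" and "C 0 1 2 = C 0 2 1"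
  shows "2 * Fc C 1 0 1 = Fc C 0 1 1 \<longleftrightarrow> C 0 1 2 = 0"
  unfolding Fc_table[OF assms(1)] using assms(2) by auto

lemma F1_F8_F10_lambda_nu_iff_xi_central:
  assumes "skew_constants C"
  shows "in_F1_F8_F10 C \<and> 2 * Fc C 1 0 1 = Fc C 0 1 1 \<longleftrightarrow> xi_central C"
  using F1_F8_F10_lambda_nu[OF assms]
  unfolding in_F1_F8_F10_iff[OF assms] xi_central_iff[OF assms] by auto

theorem theorem2p5:
  fixes C :: "nat \<Rightarrow> nat \<Rightarrow> nat \<Rightarrow> real"
  assumes "is_lie_algebra3 C"
  shows "phi_abelian C \<longleftrightarrow> (in_F1_F8_F10 C \<and> 2 * Fc C 1 0 1 = Fc C 0 1 1)"
proof -
  have skew: "skew_constants C"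
    using assms by (rule lie_algebra_skew_constants)
  have "phi_abelian C \<longleftrightarrow> xi_central C"
    using skew by (rule phi_abelian_iff_xi_central)
  also have "\<dots> \<longleftrightarrow> in_F1_F8_F10 C \<and> 2 * Fc C 1 0 1 = Fc C 0 1 1"
    using F1_F8_F10_lambda_nu_iff_xi_central[OF skew] by simp
  finally show ?thesis .
qed

end
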